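(* (Expression Safety.) Let $\Gamma$ be a Bundl context, $e$ a Bundl expression, $\tau$ a type, $\pi,\pi'$ perspectives, $p\in\mathbb{N}$, and $\eta,\sigma,\Sigma$ local, shared and global memories. Suppose that $\Gamma \vdash^{\pi} e : \tau$, that $\Gamma \vdash \eta,\sigma,\Sigma$, that $\pi \vdash p$, and that $\pi' \leq \pi$. Suppose moreover that all array accesses are in bounds: for every subexpression of $e$ of the form $e_1[e_2]$ and all values, if $\eta,\sigma,\Sigma \vdash^{\pi}_{\pi'} e_1 \Downarrow \langle l, n\rangle$ and $\eta,\sigma,\Sigma \vdash^{\pi}_{\pi'} e_2 \Downarrow i$, then $0 \le i < n$. Then there exists a value $v$ such that $\eta,\sigma,\Sigma \vdash^{\pi}_{\pi'} e \Downarrow v$ and $\eta,\sigma,\Sigma \vdash v : \tau$.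
   Context: Bundl is a core calculus parameterized by fixed positive integers $T$ (threads per block) and $B$ (blocks per grid). Levels and perspectives. Hierarchy levels are $h \in \{\mathrm{Thread},\mathrm{Block},\mathrm{Grid}\}$ with $\mathrm{Thread}\le\mathrm{Block}\le\mathrm{Grid}$. Memory kinds are $l\in\{\mathrm{Local},\mathrm{Shared},\mathrm{Global}\}$. A perspective is a pair $\pi=(h,n)$ with $h$ a level and $n\in\mathbb{N}$. Order: $(h_1,n_1)\le(h_2,n_2)$ iff $n_1$ divides $n_2$ and $h_1\le h_2$; $\pi<\pi''$ means $\pi\le\pi''$ and $\pi\neq\pi''$. Level ratios: $\mathrm{Grid}/\mathrm{Block}=B$, $\mathrm{Block}/\mathrm{Thread}=T$ (with $h/h=1$ and $\mathrm{Grid}/\mathrm{Thread}=BT$), and perspective division is $(h_1,n_1)/(h_2,n_2)=((h_1/h_2)\cdot n_1)/n_2$. For $\pi=(h,n)$ and $p\in\mathbb{N}$, $\pi\vdash p$ means $p<n$. Types and contexts. Base types $\beta ::= \mathrm{bool}\mid\mathrm{int}\mid\mathrm{float}$; types $\tau ::= \beta \mid \beta[]^{l} \mid \mathrm{Fun}(\Gamma',\pi,m) \mid \mathrm{async}\ \tau$ (function types carry a parameter context, a perspective and a memory bound). A context $\Gamma$ is a finite list of bindings $x :^{\pi}\tau$ (variable $x$ of type $\tau$ living at perspective $\pi$). Expressions: $e ::= x \mid n \mid f \mid b \mid \mathrm{partition\_id} \mid e_1[e_2] \mid e_1\ \mathrm{bop}\ e_2 \mid e_1\ \mathrm{cmp}\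 e_2$, with integer literals $n$, float literals $f$, boolean literals $b$; $\mathrm{bop}$ ranges over fixed total binary operations $\mathbb{Z}\times\mathbb{Z}\to\mathbb{Z}$ and $\mathrm{cmp}$ over fixed total comparisons $\mathbb{Z}\times\mathbb{Z}\to\{\mathrm{true},\mathrm{false}\}$. Expression typing $\Gamma\vdash^{\pi} e:\tau$ is the least relation closed under: (T-Var) if $x:^{\pi}\tau\in\Gamma$ then $\Gamma\vdash^{\pi}x:\tau$; integer, float and boolean literals have types int, float, bool at every $\pi$; (T-Partition-Id) if $\pi<(\mathrm{Grid},1)$ then $\Gamma\vdash^{\pi}\mathrm{partition\_id}:\mathrm{int}$; (T-Arr-Access) if $\Gamma\vdash^{\pi''}e_1:\tau[]^{l}$, $\Gamma\vdash^{\pi}e_2:\mathrm{int}$, $l\in\{\mathrm{Global},\mathrm{Local}\}$ and $\pi\le\pi''$, then $\Gamma\vdash^{\pi}e_1[e_2]:\tau$; (T-Arr-Access-Shared) if $\Gamma\vdash^{\pi''}e_1:\tau[]^{\mathrm{Shared}}$, $\Gamma\vdash^{\pi}e_2:\mathrm{int}$, $\pi\le(\mathrm{Block},1)$ and $\pi\le\pi''$, then $\Gamma\vdash^{\pi}e_1[e_2]:\tau$; (T-Bop) if $\Gamma\vdash^{\pi}e_1:\mathrm{int}$ and $\Gamma\vdash^{\pi}e_2:\mathrm{int}$ then $\Gamma\vdash^{\pi}e_1\ \mathrm{bop}\ e_2:\mathrm{int}$; (T-Cmp) same premises give $\Gamma\vdash^{\pi}e_1\ \mathrm{cmp}\ e_2:\mathrm{bool}$.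 Memories and values. Values are integers, floats, booleans, array references $\langle x,n\rangle$ (base location $x$, length $n$), and function closures. Local memory $\eta$, shared memory $\sigma$ and global memory $\Sigma$ are finite maps from names to values, each entry annotated with a perspective ($x\mapsto^{\pi}v$); the three have disjoint domains, and names are identified with integer locations so that $x+i$ is a location. $\mathrm{get}(\eta,\sigma,\Sigma,x)$ is the value stored at $x$ in whichever of the three memories contains $x$. Value typing $\eta,\sigma,\Sigma\vdash v:\tau$: integers have type int, booleans bool, floats float; $\langle x,n\rangle$ has type $\beta[]^{l}$ iff $\eta,\sigma,\Sigma\vdash \mathrm{get}(\eta,\sigma,\Sigma,x+i):\beta$ for all $i<n$; a closure has a function type according to a fixed given relation (defined via the typing of the closure's body statement). Environment typing $\Gamma\vdash\eta,\sigma,\Sigma$ holds iff for every binding $x:^{\pi}\tau$ in $\Gamma$: if $\tau\in\{\mathrm{int},\mathrm{bool},\mathrm{float}\}$ or $\tau=\beta[]^{\mathrm{Local}}$ then $\eta$ maps $x\mapsto^{\pi}v$ with $\eta,\sigma,\Sigma\vdash v:\tau$; if $\tau=\beta[]^{\mathrm{Shared}}$ then $\sigma$ maps $x\mapsto^{\pi}v$ with $v$ well-typed at $\tau$; if $\tau=\beta[]^{\mathrm{Global}}$ or $\tau$ is a function type then $\Sigma$ maps $x\mapsto^{\pi}v$ with $v$ well-typed at $\tau$; and no binding has a type of the form $\mathrm{async}\ \tau$. Evaluation $\eta,\sigma,\Sigma\vdash^{\pi}_{\pi'}e\Downarrow v$ ($\pi$ the ambient perspective, $\pi'$ the target perspective)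 is the least relation with: (E-Partition-Id) if $\pi<(\mathrm{Grid},1)$ and $\pi'\le\pi$ then $\mathrm{partition\_id}\Downarrow \pi/\pi'-1$; (E-Var) $x\Downarrow\mathrm{get}(\eta,\sigma,\Sigma,x)$; (E-Arr-Access) if $e_1\Downarrow\langle l,n\rangle$, $e_2\Downarrow i$, $i<n$ and $\pi'\le\pi$ then $e_1[e_2]\Downarrow\mathrm{get}(\eta,\sigma,\Sigma,l+i)$; integer, float and boolean literals evaluate to themselves; (E-Bop/E-Cmp) if $e_1\Downarrow v_1$ and $e_2\Downarrow v_2$ then $e_1\ \mathrm{bop}\ e_2\Downarrow v_1\ \mathrm{bop}\ v_2$ and $e_1\ \mathrm{cmp}\ e_2\Downarrow v_1\ \mathrm{cmp}\ v_2$ (all subevaluations at the same $\pi,\pi'$). *)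

theory Defs
  imports Complex_Main
begin

datatype level = Thread | Block | Grid

fun level_rank :: "level \<Rightarrow> nat" where
  "level_rank Thread = 0" | "level_rank Block = 1" | "level_rank Grid = 2"

definition level_le :: "level \<Rightarrow> level \<Rightarrow> bool" where
  "level_le h1 h2 \<longleftrightarrow> level_rank h1 \<le> level_rank h2"

datatype memkind = Local | Shared | Global

type_synonym persp = "level \<times> nat"

definition persp_le :: "persp \<Rightarrow> persp \<Rightarrow> bool" where
  "persp_le p1 p2 \<longleftrightarrow> snd p1 dvd snd p2 \<and> level_le (fst p1) (fst p2)"

definition persp_less :: "persp \<Rightarrow> persp \<Rightarrow> bool" where
  "persp_less p1 p2 \<longleftrightarrow> persp_le p1 p2 \<and> p1 \<noteq> p2"

text \<open>Level ratios h1/h2 (only meaningful for h2 \<le> h1; other cases are set to 0).\<close>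
fun level_ratio :: "nat \<Rightarrow> nat \<Rightarrow> level \<Rightarrow> level \<Rightarrow> nat" where
  "level_ratio T B Grid Grid = 1"
| "level_ratio T B Block Block = 1"
| "level_ratio T B Thread Thread = 1"
| "level_ratio T B Grid Block = B"
| "level_ratio T B Block Thread = T"
| "level_ratio T B Grid Thread = B * T"
| "level_ratio T B _ _ = 0"

definition persp_div :: "nat \<Rightarrow> nat \<Rightarrow> persp \<Rightarrow> persp \<Rightarrow> nat" where
  "persp_div T B p1 p2 = (level_ratio T B (fst p1) (fst p2) * snd p1) div snd p2"

definition persp_vdash :: "persp \<Rightarrow> nat \<Rightarrow> bool" where
  "persp_vdash \<pi> p \<longleftrightarrow> p < snd \<pi>"

datatype base = BBool | BInt | BFloat

type_synonym name = int

datatype ty = TBase base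
  | TArr base memkind
  | TFun "(name \<times> persp \<times> ty) list" persp nat
  | TAsync ty

type_synonym ctx = "(name \<times> persp \<times> ty) list"

datatype expr = Var name
  | IntLit int
  | FloatLit real
  | BoolLit bool
  | PartId
  | Idx expr expr
  | Bop "int \<Rightarrow> int \<Rightarrow> int" expr expr
  | Cmp "int \<Rightarrow> int \<Rightarrow> bool" expr expr

fun subexprs :: "expr \<Rightarrow> expr set" where
  "subexprs (Idx e1 e2) = insert (Idx e1 e2) (subexprs e1 \<union> subexprs e2)"
| "subexprs (Bop f e1 e2) = insert (Bop f e1 e2) (subexprs e1 \<union> subexprs e2)"
| "subexprs (Cmp f e1 e2) = insert (Cmp f e1 e2) (subexprs e1 \<union> subexprs e2)"
| "subexprs e = {e}"

inductive has_type :: "ctx \<Rightarrow> persp \<Rightarrow> expr \<Rightarrow> ty \<Rightarrow> bool" where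
  T_Var: "(x, \<pi>, \<tau>) \<in> set \<Gamma> \<Longrightarrow> has_type \<Gamma> \<pi> (Var x) \<tau>"
| T_Int: "has_type \<Gamma> \<pi> (IntLit n) (TBase BInt)"
| T_Float: "has_type \<Gamma> \<pi> (FloatLit f) (TBase BFloat)"
| T_Bool: "has_type \<Gamma> \<pi> (BoolLit b) (TBase BBool)"
| T_PartId: "persp_less \<pi> (Grid, 1) \<Longrightarrow> has_type \<Gamma> \<pi> PartId (TBase BInt)"
| T_ArrAccess: "\<lbrakk> has_type \<Gamma> \<pi>'' e1 (TArr \<beta> l); has_type \<Gamma> \<pi> e2 (TBase BInt);
     l \<in> {Global, Local}; persp_le \<pi> \<pi>'' \<rbrakk> \<Longrightarrow> has_type \<Gamma> \<pi> (Idx e1 e2) (TBase \<beta>)"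
| T_ArrAccessShared: "\<lbrakk> has_type \<Gamma> \<pi>'' e1 (TArr \<beta> Shared); has_type \<Gamma> \<pi> e2 (TBase BInt);
     persp_le \<pi> (Block, 1); persp_le \<pi> \<pi>'' \<rbrakk> \<Longrightarrow> has_type \<Gamma> \<pi> (Idx e1 e2) (TBase \<beta>)"
| T_Bop: "\<lbrakk> has_type \<Gamma> \<pi> e1 (TBase BInt); has_type \<Gamma> \<pi> e2 (TBase BInt) \<rbrakk>
     \<Longrightarrow> has_type \<Gamma> \<pi> (Bop f e1 e2) (TBase BInt)"
| T_Cmp: "\<lbrakk> has_type \<Gamma> \<pi> e1 (TBase BInt); has_type \<Gamma> \<pi> e2 (TBase BInt) \<rbrakk>
     \<Longrightarrow> has_type \<Gamma> \<pi> (Cmp f e1 e2) (TBase BBool)"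

text \<open>Closures are kept abstract (type parameter 'c).\<close>
datatype 'c val = VInt int | VFloat real | VBool bool | VArr name nat | VClos 'c

type_synonym 'c mem = "name \<Rightarrow> (persp \<times> 'c val) option"

definition get :: "'c mem \<Rightarrow> 'c mem \<Rightarrow> 'c mem \<Rightarrow> name \<Rightarrow> 'c val option" where
  "get \<eta> \<sigma> \<Sigma> x =
     (case \<eta> x of Some (_, v) \<Rightarrow> Some v
      | None \<Rightarrow> (case \<sigma> x of Some (_, v) \<Rightarrow> Some v
      | None \<Rightarrow> (case \<Sigma> x of Some (_, v) \<Rightarrow> Some v | None \<Rightarrow> None)))"

definition mems_disjoint :: "'c mem \<Rightarrow> 'c mem \<Rightarrow> 'c mem \<Rightarrow> bool" where
  "mems_disjoint \<eta> \<sigma> \<Sigma> \<longleftrightarrow>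
     dom \<eta> \<inter> dom \<sigma> = {} \<and> dom \<eta> \<inter> dom \<Sigma> = {} \<and> dom \<sigma> \<inter> dom \<Sigma> = {}"

fun base_val_typ :: "'c val \<Rightarrow> base \<Rightarrow> bool" where
  "base_val_typ (VInt _) BInt = True"
| "base_val_typ (VBool _) BBool = True"
| "base_val_typ (VFloat _) BFloat = True"
| "base_val_typ _ _ = False"

text \<open>Value typing; the closure typing relation ct is a fixed given parameter.\<close>
fun val_typ :: "('c mem \<Rightarrow> 'c mem \<Rightarrow> 'c mem \<Rightarrow> 'c \<Rightarrow> ty \<Rightarrow> bool)
    \<Rightarrow> 'c mem \<Rightarrow> 'c mem \<Rightarrow> 'c mem \<Rightarrow> 'c val \<Rightarrow> ty \<Rightarrow> bool" where
  "val_typ ct \<eta> \<sigma> \<Sigma> (VArr x n) (TArr \<beta> l) =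
     (\<forall>i<n. \<exists>w. get \<eta> \<sigma> \<Sigma> (x + int i) = Some w \<and> base_val_typ w \<beta>)"
| "val_typ ct \<eta> \<sigma> \<Sigma> (VClos c) (TFun G p m) = ct \<eta> \<sigma> \<Sigma> c (TFun G p m)"
| "val_typ ct \<eta> \<sigma> \<Sigma> v (TBase \<beta>) = base_val_typ v \<beta>"
| "val_typ ct \<eta> \<sigma> \<Sigma> _ _ = False"

definition binding_ok :: "('c mem \<Rightarrow> 'c mem \<Rightarrow> 'c mem \<Rightarrow> 'c \<Rightarrow> ty \<Rightarrow> bool)
    \<Rightarrow> 'c mem \<Rightarrow> 'c mem \<Rightarrow> 'c mem \<Rightarrow> name \<Rightarrow> persp \<Rightarrow> ty \<Rightarrow> bool" where
  "binding_ok ct \<eta> \<sigma> \<Sigma> x \<pi> \<tau> =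
     (case \<tau> of
        TBase _ \<Rightarrow> \<exists>v. \<eta> x = Some (\<pi>, v) \<and> val_typ ct \<eta> \<sigma> \<Sigma> v \<tau>
      | TArr _ Local \<Rightarrow> \<exists>v. \<eta> x = Some (\<pi>, v) \<and> val_typ ct \<eta> \<sigma> \<Sigma> v \<tau>
      | TArr _ Shared \<Rightarrow> \<exists>v. \<sigma> x = Some (\<pi>, v) \<and> val_typ ct \<eta> \<sigma> \<Sigma> v \<tau>
      | TArr _ Global \<Rightarrow> \<exists>v. \<Sigma> x = Some (\<pi>, v) \<and> val_typ ct \<eta> \<sigma> \<Sigma> v \<tau>
      | TFun _ _ _ \<Rightarrow> \<exists>v. \<Sigma> x = Some (\<pi>, v) \<and> val_typ ct \<eta> \<sigma> \<Sigma> v \<tau>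
      | TAsync _ \<Rightarrow> False)"

definition env_typ :: "('c mem \<Rightarrow> 'c mem \<Rightarrow> 'c mem \<Rightarrow> 'c \<Rightarrow> ty \<Rightarrow> bool)
    \<Rightarrow> ctx \<Rightarrow> 'c mem \<Rightarrow> 'c mem \<Rightarrow> 'c mem \<Rightarrow> bool" where
  "env_typ ct \<Gamma> \<eta> \<sigma> \<Sigma> \<longleftrightarrow> (\<forall>(x, \<pi>, \<tau>) \<in> set \<Gamma>. binding_ok ct \<eta> \<sigma> \<Sigma> x \<pi> \<tau>)"

inductive eval :: "nat \<Rightarrow> nat \<Rightarrow> 'c mem \<Rightarrow> 'c mem \<Rightarrow> 'c mem \<Rightarrow> persp \<Rightarrow> persp \<Rightarrow> expr \<Rightarrow> 'c val \<Rightarrow> bool"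
  for T B \<eta> \<sigma> \<Sigma> \<pi> \<pi>' where
  E_PartId: "\<lbrakk> persp_less \<pi> (Grid, 1); persp_le \<pi>' \<pi> \<rbrakk>
     \<Longrightarrow> eval T B \<eta> \<sigma> \<Sigma> \<pi> \<pi>' PartId (VInt (int (persp_div T B \<pi> \<pi>') - 1))"
| E_Var: "get \<eta> \<sigma> \<Sigma> x = Some v \<Longrightarrow> eval T B \<eta> \<sigma> \<Sigma> \<pi> \<pi>' (Var x) v"
| E_ArrAccess: "\<lbrakk> eval T B \<eta> \<sigma> \<Sigma> \<pi> \<pi>' e1 (VArr l n); eval T B \<eta> \<sigma> \<Sigma> \<pi> \<pi>' e2 (VInt i);
     i < int n; persp_le \<pi>' \<pi>; get \<eta> \<sigma> \<Sigma> (l + i) = Some v \<rbrakk>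
     \<Longrightarrow> eval T B \<eta> \<sigma> \<Sigma> \<pi> \<pi>' (Idx e1 e2) v"
| E_Int: "eval T B \<eta> \<sigma> \<Sigma> \<pi> \<pi>' (IntLit n) (VInt n)"
| E_Float: "eval T B \<eta> \<sigma> \<Sigma> \<pi> \<pi>' (FloatLit f) (VFloat f)"
| E_Bool: "eval T B \<eta> \<sigma> \<Sigma> \<pi> \<pi>' (BoolLit b) (VBool b)"
| E_Bop: "\<lbrakk> eval T B \<eta> \<sigma> \<Sigma> \<pi> \<pi>' e1 (VInt v1); eval T B \<eta> \<sigma> \<Sigma> \<pi> \<pi>' e2 (VInt v2) \<rbrakk>
     \<Longrightarrow> eval T B \<eta> \<sigma> \<Sigma> \<pi> \<pi>' (Bop f e1 e2) (VInt (f v1 v2))"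
| E_Cmp: "\<lbrakk> eval T B \<eta> \<sigma> \<Sigma> \<pi> \<pi>' e1 (VInt v1); eval T B \<eta> \<sigma> \<Sigma> \<pi> \<pi>' e2 (VInt v2) \<rbrakk>
     \<Longrightarrow> eval T B \<eta> \<sigma> \<Sigma> \<pi> \<pi>' (Cmp f e1 e2) (VBool (f v1 v2))"

end

theory Submission
  imports Defs
begin

text \<open>
  The only real case is an array access: the typing rules force the array to be a variable, so
  environment typing provides an array reference all of whose cells hold values of the element
  type, and the in-bounds hypothesis selects one of those cells. Disjointness of the three
  memories is what makes the lookup in \<open>get\<close> find a binding in the memory prescribed by its type.
\<close>

lemma get_if_local: "\<eta> x = Some (q, v) \<Longrightarrow> get \<eta> \<sigma> \<Sigma> x = Some v"
  by (simp add: get_def)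

lemma get_if_shared:
  assumes "mems_disjoint \<eta> \<sigma> \<Sigma>" and "\<sigma> x = Some (q, v)"
  shows "get \<eta> \<sigma> \<Sigma> x = Some v"
proof -
  have "\<eta> x = None"
    using assms by (auto simp: mems_disjoint_def)
  with assms(2) show ?thesis
    by (simp add: get_def)
qed

lemma get_if_global:
  assumes "mems_disjoint \<eta> \<sigma> \<Sigma>" and "\<Sigma> x = Some (q, v)"
  shows "get \<eta> \<sigma> \<Sigma> x = Some v"
proof -
  have "\<eta> x = None" and "\<sigma> x = None"
    using assms by (auto simp: mems_disjoint_def)
  with assms(2) show ?thesis
    by (simp add: get_def)
qed

lemma binding_ok_get:
  assumes "mems_disjoint \<eta> \<sigma> \<Sigma>" and "binding_ok ct \<eta> \<sigma> \<Sigma> x \<pi> \<tau>"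
  shows "\<exists>v. get \<eta> \<sigma> \<Sigma> x = Some v \<and> val_typ ct \<eta> \<sigma> \<Sigma> v \<tau>"
proof -
  obtain v where "val_typ ct \<eta> \<sigma> \<Sigma> v \<tau>"
    and "\<eta> x = Some (\<pi>, v) \<or> \<sigma> x = Some (\<pi>, v) \<or> \<Sigma> x = Some (\<pi>, v)"
    using assms(2) unfolding binding_ok_def
    by (auto split: ty.splits memkind.splits)
  then show ?thesis
    using get_if_local get_if_shared[OF assms(1)] get_if_global[OF assms(1)] by blast
qed

lemma env_typ_get:
  assumes "mems_disjoint \<eta> \<sigma> \<Sigma>" and "env_typ ct \<Gamma> \<eta> \<sigma> \<Sigma>" and "(x, \<pi>, \<tau>) \<in> set \<Gamma>"
  shows "\<exists>v. get \<eta> \<sigma> \<Sigma> x = Some v \<and> val_typ ct \<eta> \<sigma> \<Sigma> v \<tau>"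
proof -
  have "binding_ok ct \<eta> \<sigma> \<Sigma> x \<pi> \<tau>"
    using assms(2,3) by (auto simp: env_typ_def)
  then show ?thesis
    using binding_ok_get[OF assms(1)] by blast
qed

lemma base_val_typ_BInt_iff: "base_val_typ v BInt \<longleftrightarrow> (\<exists>i. v = VInt i)"
  by (cases v) auto

lemma val_typ_TArr_iff:
  "val_typ ct \<eta> \<sigma> \<Sigma> v (TArr \<beta> l) \<longleftrightarrow>
     (\<exists>y n. v = VArr y n \<and> (\<forall>k<n. \<exists>w. get \<eta> \<sigma> \<Sigma> (y + int k) = Some w \<and> base_val_typ w \<beta>))"
  by (cases v) auto

lemma has_type_TArr_imp_Var:
  "has_type \<Gamma> \<pi> e (TArr \<beta> l) \<Longrightarrow> \<exists>x. e = Var x \<and> (x, \<pi>, TArr \<beta> l) \<in> set \<Gamma>"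
  by (erule has_type.cases) auto

inductive_cases has_type_VarE: "has_type \<Gamma> \<pi> (Var x) \<tau>"
inductive_cases has_type_PartIdE: "has_type \<Gamma> \<pi> PartId \<tau>"
inductive_cases has_type_IdxE: "has_type \<Gamma> \<pi> (Idx e1 e2) \<tau>"
inductive_cases has_type_BopE: "has_type \<Gamma> \<pi> (Bop f e1 e2) \<tau>"
inductive_cases has_type_CmpE: "has_type \<Gamma> \<pi> (Cmp f e1 e2) \<tau>"
inductive_cases has_type_IntLitE: "has_type \<Gamma> \<pi> (IntLit n) \<tau>"
inductive_cases has_type_FloatLitE: "has_type \<Gamma> \<pi> (FloatLit f) \<tau>"
inductive_cases has_type_BoolLitE: "has_type \<Gamma> \<pi> (BoolLit b) \<tau>"

definition accesses_in_bounds ::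
    "nat \<Rightarrow> nat \<Rightarrow> 'c mem \<Rightarrow> 'c mem \<Rightarrow> 'c mem \<Rightarrow> persp \<Rightarrow> persp \<Rightarrow> expr \<Rightarrow> bool" where
  "accesses_in_bounds T B \<eta> \<sigma> \<Sigma> \<pi> \<pi>' e \<longleftrightarrow>
     (\<forall>e1 e2. Idx e1 e2 \<in> subexprs e \<longrightarrow>
        (\<forall>l n i. eval T B \<eta> \<sigma> \<Sigma> \<pi> \<pi>' e1 (VArr l n) \<longrightarrow>
                 eval T B \<eta> \<sigma> \<Sigma> \<pi> \<pi>' e2 (VInt i) \<longrightarrow> 0 \<le> i \<and> i < int n))"

lemma accesses_in_bounds_Idx:
  assumes "accesses_in_bounds T B \<eta> \<sigma> \<Sigma> \<pi> \<pi>' (Idx e1 e2)"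
  shows "accesses_in_bounds T B \<eta> \<sigma> \<Sigma> \<pi> \<pi>' e1"
    and "accesses_in_bounds T B \<eta> \<sigma> \<Sigma> \<pi> \<pi>' e2"
    and "eval T B \<eta> \<sigma> \<Sigma> \<pi> \<pi>' e1 (VArr l n) \<Longrightarrow> eval T B \<eta> \<sigma> \<Sigma> \<pi> \<pi>' e2 (VInt i)
         \<Longrightarrow> 0 \<le> i \<and> i < int n"
  using assms by (auto simp: accesses_in_bounds_def)

lemma accesses_in_bounds_Bop:
  "accesses_in_bounds T B \<eta> \<sigma> \<Sigma> \<pi> \<pi>' (Bop f e1 e2) \<Longrightarrow>
     accesses_in_bounds T B \<eta> \<sigma> \<Sigma> \<pi> \<pi>' e1 \<and> accesses_in_bounds T B \<eta> \<sigma> \<Sigma> \<pi> \<pi>' e2"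
  by (auto simp: accesses_in_bounds_def)

lemma accesses_in_bounds_Cmp:
  "accesses_in_bounds T B \<eta> \<sigma> \<Sigma> \<pi> \<pi>' (Cmp f e1 e2) \<Longrightarrow>
     accesses_in_bounds T B \<eta> \<sigma> \<Sigma> \<pi> \<pi>' e1 \<and> accesses_in_bounds T B \<eta> \<sigma> \<Sigma> \<pi> \<pi>' e2"
  by (auto simp: accesses_in_bounds_def)

lemma eval_Var_typed:
  assumes "mems_disjoint \<eta> \<sigma> \<Sigma>" and "env_typ ct \<Gamma> \<eta> \<sigma> \<Sigma>" and "(x, \<pi>'', \<tau>) \<in> set \<Gamma>"
  shows "\<exists>v. eval T B \<eta> \<sigma> \<Sigma> \<pi> \<pi>' (Var x) v \<and> val_typ ct \<eta> \<sigma> \<Sigma> v \<tau>"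
  using env_typ_get[OF assms] by (auto intro: eval.E_Var)

lemma eval_Idx_typed:
  assumes "mems_disjoint \<eta> \<sigma> \<Sigma>" and "env_typ ct \<Gamma> \<eta> \<sigma> \<Sigma>" and "persp_le \<pi>' \<pi>"
    and "has_type \<Gamma> \<pi>'' e1 (TArr \<beta> l)"
    and idx: "eval T B \<eta> \<sigma> \<Sigma> \<pi> \<pi>' e2 (VInt i)"
    and bounds: "accesses_in_bounds T B \<eta> \<sigma> \<Sigma> \<pi> \<pi>' (Idx e1 e2)"
  shows "\<exists>v. eval T B \<eta> \<sigma> \<Sigma> \<pi> \<pi>' (Idx e1 e2) v \<and> base_val_typ v \<beta>"
proof -
  obtain x where "e1 = Var x" and "(x, \<pi>'', TArr \<beta> l) \<in> set \<Gamma>"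
    using has_type_TArr_imp_Var[OF assms(4)] by blast
  then obtain a where arr: "eval T B \<eta> \<sigma> \<Sigma> \<pi> \<pi>' e1 a" "val_typ ct \<eta> \<sigma> \<Sigma> a (TArr \<beta> l)"
    using eval_Var_typed[OF assms(1,2)] by blast
  then obtain y n where "a = VArr y n"
    and cells: "\<forall>k<n. \<exists>w. get \<eta> \<sigma> \<Sigma> (y + int k) = Some w \<and> base_val_typ w \<beta>"
    by (auto simp: val_typ_TArr_iff)
  with arr idx bounds have "0 \<le> i" and "i < int n"
    using accesses_in_bounds_Idx(3) by blast+
  moreover obtain w where "get \<eta> \<sigma> \<Sigma> (y + i) = Some w" and "base_val_typ w \<beta>"
    using cells \<open>0 \<le> i\<close> \<open>i < int n\<close> by (metis nat_0_le nat_less_iff)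
  ultimately show ?thesis
    using arr \<open>a = VArr y n\<close> idx assms(3) by (blast intro: eval.E_ArrAccess)
qed

theorem expr_safety:
  assumes "mems_disjoint \<eta> \<sigma> \<Sigma>" and "env_typ ct \<Gamma> \<eta> \<sigma> \<Sigma>" and "persp_le \<pi>' \<pi>"
  shows "has_type \<Gamma> \<pi> e \<tau> \<Longrightarrow> accesses_in_bounds T B \<eta> \<sigma> \<Sigma> \<pi> \<pi>' e
           \<Longrightarrow> \<exists>v. eval T B \<eta> \<sigma> \<Sigma> \<pi> \<pi>' e v \<and> val_typ ct \<eta> \<sigma> \<Sigma> v \<tau>"
proof (induction e arbitrary: \<tau>)
  case (Var x)
  then show ?case
    using eval_Var_typed[OF assms(1,2)] by (blast elim: has_type_VarE)
next
  case PartId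
  then have below_grid: "persp_less \<pi> (Grid, 1)" and "\<tau> = TBase BInt"
    by (auto elim: has_type_PartIdE)
  from below_grid assms(3)
  have "eval T B \<eta> \<sigma> \<Sigma> \<pi> \<pi>' PartId (VInt (int (persp_div T B \<pi> \<pi>') - 1))"
    by (rule eval.E_PartId)
  with \<open>\<tau> = TBase BInt\<close> show ?case
    by auto
next
  case (Idx e1 e2)
  from Idx.prems(1) obtain \<pi>'' \<beta> l where arr: "has_type \<Gamma> \<pi>'' e1 (TArr \<beta> l)"
    and "has_type \<Gamma> \<pi> e2 (TBase BInt)" and "\<tau> = TBase \<beta>"
    by (auto elim!: has_type_IdxE)
  moreover obtain i where "eval T B \<eta> \<sigma> \<Sigma> \<pi> \<pi>' e2 (VInt i)"
    using Idx.IH(2)[OF \<open>has_type \<Gamma> \<pi> e2 (TBase BInt)\<close> accesses_in_bounds_Idx(2)[OF Idx.prems(2)]]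
    by (auto simp: base_val_typ_BInt_iff)
  ultimately show ?case
    using eval_Idx_typed[OF assms arr _ Idx.prems(2)] by auto
next
  case (Bop f e1 e2)
  from Bop.prems(1) have "has_type \<Gamma> \<pi> e1 (TBase BInt)" "has_type \<Gamma> \<pi> e2 (TBase BInt)"
    and "\<tau> = TBase BInt"
    by (auto elim!: has_type_BopE)
  with Bop.IH accesses_in_bounds_Bop[OF Bop.prems(2)] show ?case
    by (fastforce simp: base_val_typ_BInt_iff intro: eval.E_Bop)
next
  case (Cmp f e1 e2)
  from Cmp.prems(1) have "has_type \<Gamma> \<pi> e1 (TBase BInt)" "has_type \<Gamma> \<pi> e2 (TBase BInt)"
    and "\<tau> = TBase BBool"
    by (auto elim!: has_type_CmpE)
  with Cmp.IH accesses_in_bounds_Cmp[OF Cmp.prems(2)] show ?case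
    by (fastforce simp: base_val_typ_BInt_iff intro: eval.E_Cmp)
qed (auto elim!: has_type_IntLitE has_type_FloatLitE has_type_BoolLitE intro: eval.intros)

theorem lemmaA4:
  fixes T B :: nat
    and ct :: "'c mem \<Rightarrow> 'c mem \<Rightarrow> 'c mem \<Rightarrow> 'c \<Rightarrow> ty \<Rightarrow> bool"
    and \<Gamma> :: ctx and e :: expr and \<tau> :: ty and \<pi> \<pi>' :: persp and p :: nat
    and \<eta> \<sigma> \<Sigma> :: "'c mem"
  assumes "0 < T" and "0 < B"
    and "mems_disjoint \<eta> \<sigma> \<Sigma>"
    and "has_type \<Gamma> \<pi> e \<tau>"
    and "env_typ ct \<Gamma> \<eta> \<sigma> \<Sigma>"
    and "persp_vdash \<pi> p"
    and "persp_le \<pi>' \<pi>"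
    and "\<forall>e1 e2. Idx e1 e2 \<in> subexprs e \<longrightarrow>
           (\<forall>l n i. eval T B \<eta> \<sigma> \<Sigma> \<pi> \<pi>' e1 (VArr l n) \<longrightarrow>
                    eval T B \<eta> \<sigma> \<Sigma> \<pi> \<pi>' e2 (VInt i) \<longrightarrow> 0 \<le> i \<and> i < int n)"
  shows "\<exists>v. eval T B \<eta> \<sigma> \<Sigma> \<pi> \<pi>' e v \<and> val_typ ct \<eta> \<sigma> \<Sigma> v \<tau>"
  \<comment> \<open>The positivity of \<open>T\<close>, \<open>B\<close> and the index \<open>p\<close> play no role for expressions.\<close>
  using expr_safety[OF assms(3,5,7) assms(4)] assms(8)
  by (simp add: accesses_in_bounds_def)

end
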